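(* Let $\mathbb{R}^{3,1}$ denote $\mathbb{R}^4$ with the inner product $\langle\langle X,Y\rangle\rangle = X_1Y_1+X_2Y_2+X_3Y_3-X_4Y_4$. Let $S\colon\mathbb{R}^2\to\mathbb{R}^{3,1}$ be a regular smooth net with an attached tangent isotropic hyperplane congruence $P$, and let $N(u,v)$ be a normal vector to $P(u,v)$ depending smoothly on $(u,v)$. Let $C\colon[0,1]\to S(\mathbb{R}^2)$, $C(t)=S(u(t),v(t))$, be a regular smooth curve such that the family of hyperplanes $t\mapsto P(u(t),v(t))$ (written as $\langle\langle X-C(t),N(u(t),v(t))\rangle\rangle=0$) is regular, and hence has an envelope. Then at each point $C(t)$, any tangent line to the surface $S(\mathbb{R}^2)$ that is contained in the characteristic plane $\Pi(t)$ of this envelope is L-conjugate to the tangent line of $C$ at $C(t)$ with respect to $P$.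
   Context: An isotropic hyperplane in $\mathbb{R}^{3,1}$ is a hyperplane $\{(x,x_4): x_4=\langle n,x\rangle+h\}$ with $n\in\mathbb{R}^3$ a Euclidean unit vector, $h\in\mathbb{R}$. A regular smooth net is a smooth map $S\colon\mathbb{R}^2\to\mathbb{R}^{3,1}$ with $S_u\not\parallel S_v$ everywhere; an attached tangent isotropic hyperplane congruence is a smooth map $(u,v)\mapsto P(u,v)$ to isotropic hyperplanes with $S(u,v)\in P(u,v)$ and $S_u,S_v$ parallel to $P(u,v)$. For a family of hyperplanes $P(t):\langle\langle X-S(t),N(t)\rangle\rangle=0$, $t\in[0,1]$, with $S,N$ smooth, the family is regular if $\dot N(t)\not\parallel N(t)$ for all $t$; then $\dot P(t)$ denotes the hyperplane $\langle\langle X-S(t),\dot N(t)\rangle\rangle-\langle\langle \dot S(t),N(t)\rangle\rangle=0$, the characteristic plane is $\Pi(t)=P(t)\cap\dot P(t)$, and the union of the $\Pi(t)$ is the envelope. L-conjugacy: define $L_P=\langle\langle S_{uu},N\rangle\rangle$, $M_P=\langle\langle S_{uv},N\rangle\rangle$, $N_P=\langle\langle S_{vv},N\rangle\rangle$ and $\mathrm{II}_{S,P}(A,B)=L_Pa_1b_1+M_P(a_1b_2+a_2b_1)+N_Pa_2b_2$ for $A=a_1S_u+a_2S_v$, $B=b_1S_u+b_2S_v$. Two non-parallel tangent vectors $T_1,T_2$ at $S(u,v)$ are L-conjugate with respect to $P$ if there is a diffeomorphism $D$ of $\mathbb{R}^2$ such that for $\bar S=S\circ D$, $\bar P=P\circ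 D$, at the corresponding parameter $\bar S_u\parallel T_1$, $\bar S_v\parallel T_2$ and $\bar S_u,\bar S_v,\bar S_{uv}$ are parallel to $\bar P$ (equivalently, $\mathrm{II}_{S,P}(T_1,T_2)=0$); a tangent vector $A$ is called L-conjugate to itself with respect to $P$ if $\mathrm{II}_{S,P}(A,A)=0$. Tangent lines are L-conjugate if their direction vectors are. *)

theory Defs
  imports "HOL-Analysis.Analysis"
begin

definition lip :: "real^4 \<Rightarrow> real^4 \<Rightarrow> real" where
  "lip X Y = X$1*Y$1 + X$2*Y$2 + X$3*Y$3 - X$4*Y$4"

fun Ck :: "nat \<Rightarrow> ('a::real_normed_vector \<Rightarrow> 'b::real_normed_vector) \<Rightarrow> bool" where
  "Ck 0 f = continuous_on UNIV f"
| "Ck (Suc k) f = (f differentiable_on UNIV \<and>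
      (\<forall>w. Ck k (\<lambda>x. frechet_derivative f (at x) w)))"

definition smooth :: "('a::real_normed_vector \<Rightarrow> 'b::real_normed_vector) \<Rightarrow> bool" where
  "smooth f = (\<forall>k. Ck k f)"

definition pd_u :: "(real^2 \<Rightarrow> 'b::real_normed_vector) \<Rightarrow> real^2 \<Rightarrow> 'b" where
  "pd_u f p = frechet_derivative f (at p) (axis 1 1)"

definition pd_v :: "(real^2 \<Rightarrow> 'b::real_normed_vector) \<Rightarrow> real^2 \<Rightarrow> 'b" where
  "pd_v f p = frechet_derivative f (at p) (axis 2 1)"

definition vparallel :: "'a::real_vector \<Rightarrow> 'a \<Rightarrow> bool" where
  "vparallel a b = (\<exists>c. a = c *\<^sub>R b \<or> b = c *\<^sub>R a)"

definition iso_hyp :: "real^3 \<Rightarrow> real \<Rightarrow> (real^4) set" where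
  "iso_hyp n h = {X. X$4 = n$1*X$1 + n$2*X$2 + n$3*X$3 + h}"

definition parallel_to :: "real^4 \<Rightarrow> (real^4) set \<Rightarrow> bool" where
  "parallel_to V H = (\<forall>Y\<in>H. Y + V \<in> H)"

definition regular_net :: "(real^2 \<Rightarrow> real^4) \<Rightarrow> bool" where
  "regular_net S = (smooth S \<and> (\<forall>p. \<not> vparallel (pd_u S p) (pd_v S p)))"

definition tangent_iso_congruence ::
    "(real^2 \<Rightarrow> real^4) \<Rightarrow> (real^2 \<Rightarrow> real^3) \<Rightarrow> (real^2 \<Rightarrow> real) \<Rightarrow> bool" where
  "tangent_iso_congruence S n h = (smooth n \<and> smooth h \<and>
     (\<forall>p. norm (n p) = 1 \<and> S p \<in> iso_hyp (n p) (h p) \<and>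
          parallel_to (pd_u S p) (iso_hyp (n p) (h p)) \<and>
          parallel_to (pd_v S p) (iso_hyp (n p) (h p))))"

definition normal_to :: "real^4 \<Rightarrow> (real^4) set \<Rightarrow> bool" where
  "normal_to N H = (N \<noteq> 0 \<and> (\<forall>X\<in>H. \<forall>Y\<in>H. lip (X - Y) N = 0))"

definition tcoords :: "(real^2 \<Rightarrow> real^4) \<Rightarrow> real^2 \<Rightarrow> real^4 \<Rightarrow> real \<times> real" where
  "tcoords S p A = (THE (a1, a2). A = a1 *\<^sub>R pd_u S p + a2 *\<^sub>R pd_v S p)"

definition II :: "(real^2 \<Rightarrow> real^4) \<Rightarrow> (real^2 \<Rightarrow> real^4) \<Rightarrow> real^2 \<Rightarrow> real^4 \<Rightarrow> real^4 \<Rightarrow> real" where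
  "II S N p A B =
    (let (a1, a2) = tcoords S p A; (b1, b2) = tcoords S p B;
         LP = lip (pd_u (pd_u S) p) (N p);
         MP = lip (pd_v (pd_u S) p) (N p);
         NP = lip (pd_v (pd_v S) p) (N p)
     in LP*a1*b1 + MP*(a1*b2 + a2*b1) + NP*a2*b2)"

text \<open>L-conjugacy of tangent directions (II-characterisation given in the paper);
  parallel directions (same tangent line) are L-conjugate iff the direction is
  L-conjugate to itself.\<close>
definition L_conjugate :: "(real^2 \<Rightarrow> real^4) \<Rightarrow> (real^2 \<Rightarrow> real^4) \<Rightarrow> real^2 \<Rightarrow> real^4 \<Rightarrow> real^4 \<Rightarrow> bool" where
  "L_conjugate S N p A B =
     (if vparallel A B then II S N p A A = 0 else II S N p A B = 0)"

text \<open>Characteristic plane Pi(t) = P(t) \<inter> P'(t) of the family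
  P(t): <<X - C(t), N(t)>> = 0.\<close>
definition char_plane :: "(real \<Rightarrow> real^4) \<Rightarrow> (real \<Rightarrow> real^4) \<Rightarrow> real \<Rightarrow> (real^4) set" where
  "char_plane C Nt t =
     {X. lip (X - C t) (Nt t) = 0} \<inter>
     {X. lip (X - C t) (vector_derivative Nt (at t)) - lip (vector_derivative C (at t)) (Nt t) = 0}"

end

theory Submission imports Defs begin

(* Since S_u and S_v lie in P, they are Lorentz-orthogonal to N everywhere; differentiating
   these identities and using the symmetry of mixed partials gives the Weingarten-type relation
   II(A, dS(w)) = -<<A, dN(w)>> for every tangent vector A. A point C(t) + T lies in the
   characteristic plane iff <<T, (N o gamma)'>> = <<C', N>>, and the right-hand side vanishes
   because C' is tangent; hence II(T, C') = 0, which is L-conjugacy (for parallel T and C'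
   the bilinearity of II reduces it to II(T, T) = 0). *)

interpretation lip: bounded_bilinear lip
proof -
  have "bilinear lip"
    unfolding bilinear_def by (auto intro!: linearI simp: lip_def algebra_simps)
  then show "bounded_bilinear lip"
    using bilinear_conv_bounded_bilinear by blast
qed

lemma has_real_derivative_along_line:
  assumes "(f has_derivative F) (at (a + x *\<^sub>R e))"
  shows "((\<lambda>s. f (a + s *\<^sub>R e)) has_real_derivative F e) (at x)"
proof -
  have "((\<lambda>s. a + s *\<^sub>R e) has_derivative (\<lambda>s. s *\<^sub>R e)) (at x)"
    by (auto intro!: derivative_eq_intros)
  from diff_chain_at[OF this assms]
  have "((\<lambda>s. f (a + s *\<^sub>R e)) has_derivative (\<lambda>s. s * F e)) (at x)"
    using linear_cmul[OF has_derivative_linear[OF assms]] by (simp add: o_def)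
  then show ?thesis
    by (simp add: has_field_derivative_def mult.commute[of _ "F e"])
qed

lemma second_difference_mvt:
  fixes g :: "'a::real_normed_vector \<Rightarrow> real"
  assumes g: "\<And>p. (g has_derivative G p) (at p)"
    and gu: "\<And>p. ((\<lambda>p. G p u) has_derivative GU p) (at p)"
    and h: "h > 0"
  obtains \<xi> \<eta> where "0 < \<xi>" "\<xi> < h" "0 < \<eta>" "\<eta> < h"
    "g (q + h *\<^sub>R u + h *\<^sub>R v) - g (q + h *\<^sub>R u) - g (q + h *\<^sub>R v) + g q
       = h * h * GU (q + \<xi> *\<^sub>R u + \<eta> *\<^sub>R v) v"
proof -
  define \<phi> where "\<phi> x = g (q + h *\<^sub>R v + x *\<^sub>R u) - g (q + x *\<^sub>R u)" for x
  have "(\<phi> has_real_derivative (G (q + h *\<^sub>R v + x *\<^sub>R u) u - G (q + x *\<^sub>R u) u)) (at x)" for x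
    unfolding \<phi>_def
    by (intro DERIV_diff has_real_derivative_along_line g)
  then obtain \<xi> where \<xi>: "0 < \<xi>" "\<xi> < h"
    and \<phi>_diff: "\<phi> h - \<phi> 0 = h * (G (q + h *\<^sub>R v + \<xi> *\<^sub>R u) u - G (q + \<xi> *\<^sub>R u) u)"
    using MVT2[OF h, of \<phi> "\<lambda>x. G (q + h *\<^sub>R v + x *\<^sub>R u) u - G (q + x *\<^sub>R u) u"]
    by auto
  define \<psi> where "\<psi> y = G (q + \<xi> *\<^sub>R u + y *\<^sub>R v) u" for y
  have "(\<psi> has_real_derivative GU (q + \<xi> *\<^sub>R u + y *\<^sub>R v) v) (at y)" for y
    unfolding \<psi>_def by (rule has_real_derivative_along_line[OF gu])
  then obtain \<eta> where \<eta>: "0 < \<eta>" "\<eta> < h"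
    and \<psi>_diff: "\<psi> h - \<psi> 0 = h * GU (q + \<xi> *\<^sub>R u + \<eta> *\<^sub>R v) v"
    using MVT2[OF h, of \<psi> "\<lambda>y. GU (q + \<xi> *\<^sub>R u + y *\<^sub>R v) v"] by auto
  have "q + h *\<^sub>R v + \<xi> *\<^sub>R u = q + \<xi> *\<^sub>R u + h *\<^sub>R v" "q + h *\<^sub>R v + h *\<^sub>R u = q + h *\<^sub>R u + h *\<^sub>R v"
    by (simp_all add: algebra_simps)
  with \<phi>_diff \<psi>_diff
  have "g (q + h *\<^sub>R u + h *\<^sub>R v) - g (q + h *\<^sub>R u) - g (q + h *\<^sub>R v) + g q
       = h * h * GU (q + \<xi> *\<^sub>R u + \<eta> *\<^sub>R v) v"
    unfolding \<phi>_def \<psi>_def by (simp add: algebra_simps)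
  with \<xi> \<eta> that show thesis by blast
qed

lemma mixed_partials_commute:
  fixes g :: "'a::real_normed_vector \<Rightarrow> real"
  assumes g: "\<And>p. (g has_derivative G p) (at p)"
    and gu: "\<And>p. ((\<lambda>p. G p u) has_derivative GU p) (at p)"
    and gv: "\<And>p. ((\<lambda>p. G p v) has_derivative GV p) (at p)"
    and cont_uv: "isCont (\<lambda>p. GU p v) q" and cont_vu: "isCont (\<lambda>p. GV p u) q"
  shows "GU q v = GV q u"
proof (rule ccontr)
  assume ne: "GU q v \<noteq> GV q u"
  define \<epsilon> where "\<epsilon> = \<bar>GU q v - GV q u\<bar> / 2"
  have "\<epsilon> > 0" using ne by (simp add: \<epsilon>_def)
  then obtain d1 d2 where d: "d1 > 0" "d2 > 0"
    and d1: "\<And>p. dist p q < d1 \<Longrightarrow> dist (GU p v) (GU q v) < \<epsilon>"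
    and d2: "\<And>p. dist p q < d2 \<Longrightarrow> dist (GV p u) (GV q u) < \<epsilon>"
    using cont_uv cont_vu unfolding continuous_at_eps_delta by metis
  define h where "h = min d1 d2 / (norm u + norm v + 1)"
  have norms_pos: "norm u + norm v + 1 > 0"
    using norm_ge_zero[of u] norm_ge_zero[of v] by linarith
  with d have h: "h > 0" by (simp add: h_def)
  have close: "dist (q + a *\<^sub>R x + b *\<^sub>R y) q < min d1 d2"
    if "0 < a" "a < h" "0 < b" "b < h" "{x, y} = {u, v}" for a b x y
  proof -
    have "dist (q + a *\<^sub>R x + b *\<^sub>R y) q \<le> a * norm x + b * norm y"
      using norm_triangle_ineq[of "a *\<^sub>R x" "b *\<^sub>R y"] that by (simp add: dist_norm)
    also have "\<dots> \<le> h * norm x + h * norm y"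
      using that by (intro add_mono mult_right_mono) auto
    also have "\<dots> = h * (norm u + norm v)"
      using that(5) by (auto simp: doubleton_eq_iff algebra_simps)
    also have "\<dots> < h * (norm u + norm v + 1)"
      using h by simp
    also have "\<dots> = min d1 d2"
      using norms_pos by (simp add: h_def)
    finally show ?thesis .
  qed
  \<comment> \<open>The same second difference, divided by h^2, is a value of each mixed partial near q.\<close>
  obtain a b where ab: "0 < a" "a < h" "0 < b" "b < h" and E1:
    "g (q + h *\<^sub>R u + h *\<^sub>R v) - g (q + h *\<^sub>R u) - g (q + h *\<^sub>R v) + g q
       = h * h * GU (q + a *\<^sub>R u + b *\<^sub>R v) v"
    using second_difference_mvt[OF g gu h] .
  obtain c e where ce: "0 < c" "c < h" "0 < e" "e < h" and E2:
    "g (q + h *\<^sub>R v + h *\<^sub>R u) - g (q + h *\<^sub>R v) - g (q + h *\<^sub>R u) + g q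
       = h * h * GV (q + c *\<^sub>R v + e *\<^sub>R u) u"
    using second_difference_mvt[OF g gv h] .
  have corner: "q + h *\<^sub>R v + h *\<^sub>R u = q + h *\<^sub>R u + h *\<^sub>R v"
    by (simp add: algebra_simps)
  have "h * h * GU (q + a *\<^sub>R u + b *\<^sub>R v) v = h * h * GV (q + c *\<^sub>R v + e *\<^sub>R u) u"
    using E1 E2[unfolded corner] by linarith
  with h have eq: "GU (q + a *\<^sub>R u + b *\<^sub>R v) v = GV (q + c *\<^sub>R v + e *\<^sub>R u) u"
    by simp
  have "dist (GU (q + a *\<^sub>R u + b *\<^sub>R v) v) (GU q v) < \<epsilon>"
    using close[OF ab] by (intro d1) auto
  moreover have "dist (GV (q + c *\<^sub>R v + e *\<^sub>R u) u) (GV q u) < \<epsilon>"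
    using close[OF ce] by (intro d2) auto
  ultimately show False
    using eq unfolding \<epsilon>_def dist_real_def by (smt (verit) field_sum_of_halves)
qed

lemma Ck_Suc_differentiable: "Ck (Suc k) f \<Longrightarrow> f differentiable at x"
  by (simp add: differentiable_on_def)

lemma Ck_Suc_directional_derivative:
  "Ck (Suc k) f \<Longrightarrow> Ck k (\<lambda>x. frechet_derivative f (at x) w)"
  by simp

lemma smooth_differentiable: "smooth f \<Longrightarrow> f differentiable at x"
  unfolding smooth_def by (metis Ck_Suc_differentiable)

lemma Ck2_mixed_partials_commute:
  fixes f :: "'a::real_normed_vector \<Rightarrow> 'b::euclidean_space"
  assumes "Ck 2 f"
  shows "frechet_derivative (\<lambda>x. frechet_derivative f (at x) u) (at p) v
       = frechet_derivative (\<lambda>x. frechet_derivative f (at x) v) (at p) u"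
proof (rule euclidean_eqI)
  fix b :: 'b
  define D where "D f' x = frechet_derivative f' (at x)" for f' :: "'a \<Rightarrow> 'b" and x
  have f2: "Ck (Suc (Suc 0)) f" using assms by (simp add: numeral_2_eq_2)
  have Df: "(f has_derivative D f x) (at x)" for x
    using Ck_Suc_differentiable[OF f2] frechet_derivative_works unfolding D_def by blast
  have "Ck (Suc 0) (\<lambda>x. D f x w)" for w
    using Ck_Suc_directional_derivative[OF f2] unfolding D_def .
  then have DDf: "((\<lambda>x. D f x w) has_derivative D (\<lambda>x. D f x w) x) (at x)" for w x
    using Ck_Suc_differentiable frechet_derivative_works unfolding D_def by blast
  have "continuous_on UNIV (\<lambda>x. D (\<lambda>x. D f x w) x w')" for w w'
    using Ck_Suc_directional_derivative[OF \<open>Ck (Suc 0) (\<lambda>x. D f x w)\<close>]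
    unfolding D_def by simp
  then have cont: "isCont (\<lambda>x. D (\<lambda>x. D f x w) x w' \<bullet> b) p" for w w'
    by (intro continuous_intros) (simp add: continuous_on_eq_continuous_at)
  have "D (\<lambda>x. D f x u) p v \<bullet> b = D (\<lambda>x. D f x v) p u \<bullet> b"
  proof (rule mixed_partials_commute[where g="\<lambda>x. f x \<bullet> b" and G="\<lambda>x h. D f x h \<bullet> b"])
    show "((\<lambda>x. f x \<bullet> b) has_derivative (\<lambda>h. D f x h \<bullet> b)) (at x)" for x
      by (rule has_derivative_inner_left[OF Df])
  qed (rule has_derivative_inner_left[OF DDf] cont)+
  then show "frechet_derivative (\<lambda>x. frechet_derivative f (at x) u) (at p) v \<bullet> b
      = frechet_derivative (\<lambda>x. frechet_derivative f (at x) v) (at p) u \<bullet> b"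
    by (simp add: D_def)
qed

context bounded_bilinear
begin

lemma frechet_derivative_vanishing_prod:
  assumes "f differentiable at p" "g differentiable at p" "\<And>x. prod (f x) (g x) = 0"
  shows "prod (f p) (frechet_derivative g (at p) d) + prod (frechet_derivative f (at p) d) (g p) = 0"
proof -
  have "((\<lambda>x. prod (f x) (g x)) has_derivative
      (\<lambda>d. prod (f p) (frechet_derivative g (at p) d) + prod (frechet_derivative f (at p) d) (g p))) (at p)"
    using assms(1,2) by (intro FDERIV) (simp_all add: frechet_derivative_works)
  moreover have "(\<lambda>x. prod (f x) (g x)) = (\<lambda>x. 0)"
    using assms(3) by simp
  ultimately have "((\<lambda>x. 0) has_derivative
      (\<lambda>d. prod (f p) (frechet_derivative g (at p) d) + prod (frechet_derivative f (at p) d) (g p))) (at p)"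
    by simp
  from has_derivative_unique[OF this has_derivative_const] show ?thesis
    by metis
qed

end

lemma vector_derivative_comp_at:
  assumes "g differentiable at t" "F differentiable at (g t)"
  shows "vector_derivative (F \<circ> g) (at t) = frechet_derivative F (at (g t)) (vector_derivative g (at t))"
proof -
  have "(g has_vector_derivative vector_derivative g (at t)) (at t within UNIV)"
    using assms(1) vector_derivative_works by blast
  moreover have "(F has_derivative frechet_derivative F (at (g t))) (at (g t) within range g)"
    using assms(2) frechet_derivative_works has_derivative_at_withinI by blast
  ultimately have "((F \<circ> g) has_vector_derivative frechet_derivative F (at (g t)) (vector_derivative g (at t))) (at t)"
    using vector_derivative_diff_chain_within by fastforce
  then show ?thesis
    by (rule vector_derivative_at)
qed

lemma frechet_derivative_eq_partials:
  fixes F :: "real^2 \<Rightarrow> 'b::real_normed_vector"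
  assumes "F differentiable at p"
  shows "frechet_derivative F (at p) d = d$1 *\<^sub>R pd_u F p + d$2 *\<^sub>R pd_v F p"
proof -
  have L: "linear (frechet_derivative F (at p))"
    using linear_frechet_derivative[OF assms] .
  have "d = d$1 *\<^sub>R axis 1 1 + d$2 *\<^sub>R axis 2 1"
    by (simp add: vec_eq_iff forall_2 axis_def)
  then have "frechet_derivative F (at p) d
      = frechet_derivative F (at p) (d$1 *\<^sub>R axis 1 1 + d$2 *\<^sub>R axis 2 1)"
    by (rule arg_cong)
  also have "\<dots> = d$1 *\<^sub>R pd_u F p + d$2 *\<^sub>R pd_v F p"
    by (simp add: linear_add[OF L] linear_cmul[OF L] pd_u_def pd_v_def)
  finally show ?thesis .
qed

lemma span_pairE:
  assumes "x \<in> span {a, b}"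
  obtains c d where "x = c *\<^sub>R a + d *\<^sub>R b"
proof -
  from assms obtain c where "x - c *\<^sub>R a \<in> span {b}"
    by (auto simp: span_breakdown_eq)
  then obtain d where "x - c *\<^sub>R a = d *\<^sub>R b"
    by (auto simp: span_singleton)
  then show thesis
    using that[of c d] by (simp add: algebra_simps)
qed

lemma not_vparallel_lincomb_inj:
  assumes np: "\<not> vparallel (A::'a::real_vector) B"
    and eq: "x1 *\<^sub>R A + x2 *\<^sub>R B = y1 *\<^sub>R A + y2 *\<^sub>R B"
  shows "x1 = y1 \<and> x2 = y2"
proof -
  have e: "(x1 - y1) *\<^sub>R A = (y2 - x2) *\<^sub>R B" using eq by (simp add: algebra_simps)
  have B0: "B \<noteq> 0" using np unfolding vparallel_def by (metis scale_zero_left)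
  show ?thesis
  proof (cases "x1 = y1")
    case True
    with e B0 show ?thesis by simp
  next
    case False
    have "A = inverse (x1 - y1) *\<^sub>R ((x1 - y1) *\<^sub>R A)"
      using False by simp
    also have "\<dots> = (inverse (x1 - y1) * (y2 - x2)) *\<^sub>R B"
      using e by simp
    finally show ?thesis using np unfolding vparallel_def by blast
  qed
qed

lemma lip_eq_0_if_parallel_to:
  assumes "normal_to N H" "parallel_to V H" "X \<in> H"
  shows "lip V N = 0"
proof -
  have "X + V \<in> H" using assms(2,3) by (simp add: parallel_to_def)
  then have "lip ((X + V) - X) N = 0" using assms(1,3) unfolding normal_to_def by blast
  then show ?thesis by simp
qed

lemma tangent_iso_congruence_lip_pd_eq_0:
  assumes "tangent_iso_congruence S n h" "\<forall>p. normal_to (N p) (iso_hyp (n p) (h p))"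
  shows "lip (pd_u S p) (N p) = 0" "lip (pd_v S p) (N p) = 0"
proof -
  have "S p \<in> iso_hyp (n p) (h p)" "parallel_to (pd_u S p) (iso_hyp (n p) (h p))"
    "parallel_to (pd_v S p) (iso_hyp (n p) (h p))"
    using assms(1) by (simp_all add: tangent_iso_congruence_def)
  then show "lip (pd_u S p) (N p) = 0" "lip (pd_v S p) (N p) = 0"
    using lip_eq_0_if_parallel_to[OF assms(2)[rule_format]] by blast+
qed

lemma tcoords_lincomb:
  assumes "\<not> vparallel (pd_u S p) (pd_v S p)"
  shows "tcoords S p (a1 *\<^sub>R pd_u S p + a2 *\<^sub>R pd_v S p) = (a1, a2)"
  unfolding tcoords_def
proof (rule the_equality)
  fix z assume "case z of (x1, x2) \<Rightarrow>
      a1 *\<^sub>R pd_u S p + a2 *\<^sub>R pd_v S p = x1 *\<^sub>R pd_u S p + x2 *\<^sub>R pd_v S p"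
  then show "z = (a1, a2)"
    using not_vparallel_lincomb_inj[OF assms] by (cases z) auto
qed simp

lemma II_lincomb:
  assumes "\<not> vparallel (pd_u S p) (pd_v S p)"
  shows "II S N p (a1 *\<^sub>R pd_u S p + a2 *\<^sub>R pd_v S p) (b1 *\<^sub>R pd_u S p + b2 *\<^sub>R pd_v S p) =
    lip (pd_u (pd_u S) p) (N p) * a1 * b1 + lip (pd_v (pd_u S) p) (N p) * (a1 * b2 + a2 * b1)
    + lip (pd_v (pd_v S) p) (N p) * a2 * b2"
  by (simp add: II_def tcoords_lincomb[OF assms])

lemma II_commute:
  assumes "\<not> vparallel (pd_u S p) (pd_v S p)"
    and "A \<in> span {pd_u S p, pd_v S p}" "B \<in> span {pd_u S p, pd_v S p}"
  shows "II S N p A B = II S N p B A"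
  using assms(2,3)
  by (elim span_pairE) (simp add: II_lincomb[OF assms(1)] algebra_simps)

lemma II_scaleR_left:
  assumes "\<not> vparallel (pd_u S p) (pd_v S p)"
    and "A \<in> span {pd_u S p, pd_v S p}" "B \<in> span {pd_u S p, pd_v S p}"
  shows "II S N p (c *\<^sub>R A) B = c * II S N p A B"
proof -
  obtain a1 a2 b1 b2 where A: "A = a1 *\<^sub>R pd_u S p + a2 *\<^sub>R pd_v S p"
    and B: "B = b1 *\<^sub>R pd_u S p + b2 *\<^sub>R pd_v S p"
    using assms(2,3) by (elim span_pairE)
  have "c *\<^sub>R A = (c * a1) *\<^sub>R pd_u S p + (c * a2) *\<^sub>R pd_v S p"
    by (simp add: A algebra_simps)
  then show ?thesis
    by (simp add: A B II_lincomb[OF assms(1)] algebra_simps)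
qed

lemma L_conjugate_if_II_eq_0:
  assumes reg: "\<not> vparallel (pd_u S p) (pd_v S p)"
    and A: "A \<in> span {pd_u S p, pd_v S p}" and B: "B \<in> span {pd_u S p, pd_v S p}"
    and "B \<noteq> 0" and II_AB: "II S N p A B = 0"
  shows "L_conjugate S N p A B"
proof (cases "vparallel A B")
  case True
  then obtain c where "A = c *\<^sub>R B \<or> B = c *\<^sub>R A"
    unfolding vparallel_def by blast
  then have "II S N p A A = 0"
  proof
    assume "A = c *\<^sub>R B"
    then have "II S N p A A = c * II S N p B A"
      using II_scaleR_left[OF reg B A] by simp
    also have "\<dots> = 0"
      using II_commute[OF reg A B] II_AB by simp
    finally show ?thesis .
  next
    assume cA: "B = c *\<^sub>R A"
    with \<open>B \<noteq> 0\<close> have "c \<noteq> 0" by auto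
    have "c * II S N p A A = II S N p B A"
      using II_scaleR_left[OF reg A A] cA by simp
    also have "\<dots> = 0"
      using II_commute[OF reg A B] II_AB by simp
    finally show ?thesis
      using \<open>c \<noteq> 0\<close> by simp
  qed
  with True show ?thesis
    by (simp add: L_conjugate_def)
qed (simp add: L_conjugate_def II_AB)

lemma II_eq_minus_lip_frechet_derivative:
  fixes S N :: "real^2 \<Rightarrow> real^4"
  assumes S: "Ck 2 S" and N: "N differentiable at p"
    and tan_u: "\<And>x. lip (pd_u S x) (N x) = 0" and tan_v: "\<And>x. lip (pd_v S x) (N x) = 0"
    and reg: "\<not> vparallel (pd_u S p) (pd_v S p)"
  shows "II S N p (b1 *\<^sub>R pd_u S p + b2 *\<^sub>R pd_v S p) (frechet_derivative S (at p) d)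
       = - lip (b1 *\<^sub>R pd_u S p + b2 *\<^sub>R pd_v S p) (frechet_derivative N (at p) d)"
proof -
  have S2: "Ck (Suc (Suc 0)) S" using S by (simp add: numeral_2_eq_2)
  have "pd_u S = (\<lambda>x. frechet_derivative S (at x) (axis 1 1))"
    "pd_v S = (\<lambda>x. frechet_derivative S (at x) (axis 2 1))"
    by (simp_all add: fun_eq_iff pd_u_def pd_v_def)
  then have Su: "pd_u S differentiable at p" and Sv: "pd_v S differentiable at p"
    using Ck_Suc_differentiable[OF Ck_Suc_directional_derivative[OF S2]] by simp_all
  have uu: "lip (pd_u S p) (pd_u N p) = - lip (pd_u (pd_u S) p) (N p)"
    using lip.frechet_derivative_vanishing_prod[OF Su N tan_u, of "axis 1 1"]
    unfolding pd_u_def[of N p] pd_u_def[of "pd_u S" p] by (simp add: eq_neg_iff_add_eq_0)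
  have uv: "lip (pd_u S p) (pd_v N p) = - lip (pd_v (pd_u S) p) (N p)"
    using lip.frechet_derivative_vanishing_prod[OF Su N tan_u, of "axis 2 1"]
    unfolding pd_v_def[of N p] pd_v_def[of "pd_u S" p] by (simp add: eq_neg_iff_add_eq_0)
  have vu: "lip (pd_v S p) (pd_u N p) = - lip (pd_u (pd_v S) p) (N p)"
    using lip.frechet_derivative_vanishing_prod[OF Sv N tan_v, of "axis 1 1"]
    unfolding pd_u_def[of N p] pd_u_def[of "pd_v S" p] by (simp add: eq_neg_iff_add_eq_0)
  have vv: "lip (pd_v S p) (pd_v N p) = - lip (pd_v (pd_v S) p) (N p)"
    using lip.frechet_derivative_vanishing_prod[OF Sv N tan_v, of "axis 2 1"]
    unfolding pd_v_def[of N p] pd_v_def[of "pd_v S" p] by (simp add: eq_neg_iff_add_eq_0)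
  have sym: "pd_v (pd_u S) p = pd_u (pd_v S) p"
    using Ck2_mixed_partials_commute[OF S] by (simp add: pd_u_def[abs_def] pd_v_def[abs_def])
  show ?thesis
    using Ck_Suc_differentiable[OF S2]
    by (simp add: frechet_derivative_eq_partials N II_lincomb[OF reg] uu uv vu vv sym
        lip.add_left lip.add_right lip.scaleR_left lip.scaleR_right algebra_simps)
qed

theorem proposition1:
  fixes S :: "real^2 \<Rightarrow> real^4" and n :: "real^2 \<Rightarrow> real^3" and h :: "real^2 \<Rightarrow> real"
    and N :: "real^2 \<Rightarrow> real^4" and \<gamma> :: "real \<Rightarrow> real^2" and t :: real and T :: "real^4"
  assumes net: "regular_net S"
    and cong: "tangent_iso_congruence S n h"
    and N_smooth: "smooth N"
    and N_normal: "\<forall>p. normal_to (N p) (iso_hyp (n p) (h p))"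
    and gamma_smooth: "smooth \<gamma>"
    and C_regular: "\<forall>s\<in>{0..1}. vector_derivative (S \<circ> \<gamma>) (at s) \<noteq> 0"
    and family_regular: "\<forall>s\<in>{0..1}.
          \<not> vparallel (vector_derivative (N \<circ> \<gamma>) (at s)) ((N \<circ> \<gamma>) s)"
    and t_in: "t \<in> {0..1}"
    and T_tangent: "T \<in> span {pd_u S (\<gamma> t), pd_v S (\<gamma> t)}"
    and T_nonzero: "T \<noteq> 0"
    and T_in_char: "\<forall>s::real. (S \<circ> \<gamma>) t + s *\<^sub>R T \<in> char_plane (S \<circ> \<gamma>) (N \<circ> \<gamma>) t"
  shows "L_conjugate S N (\<gamma> t) T (vector_derivative (S \<circ> \<gamma>) (at t))"
proof -
  \<comment> \<open>Regularity of the family only guarantees that the envelope exists.\<close>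
  let ?p = "\<gamma> t" and ?d = "vector_derivative \<gamma> (at t)"
  have S2: "Ck 2 S" and reg: "\<not> vparallel (pd_u S ?p) (pd_v S ?p)"
    using net by (simp_all add: regular_net_def smooth_def)
  note tangent = tangent_iso_congruence_lip_pd_eq_0[OF cong N_normal]
  have C': "vector_derivative (S \<circ> \<gamma>) (at t) = frechet_derivative S (at ?p) ?d"
    and N': "vector_derivative (N \<circ> \<gamma>) (at t) = frechet_derivative N (at ?p) ?d"
    using net N_smooth gamma_smooth
    by (simp_all add: regular_net_def smooth_differentiable vector_derivative_comp_at)
  have C'_expand: "frechet_derivative S (at ?p) ?d = ?d$1 *\<^sub>R pd_u S ?p + ?d$2 *\<^sub>R pd_v S ?p"
    using net by (simp add: regular_net_def smooth_differentiable frechet_derivative_eq_partials)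
  obtain b1 b2 where T: "T = b1 *\<^sub>R pd_u S ?p + b2 *\<^sub>R pd_v S ?p"
    using T_tangent by (elim span_pairE)
  have "lip T (vector_derivative (N \<circ> \<gamma>) (at t)) = lip (vector_derivative (S \<circ> \<gamma>) (at t)) (N ?p)"
    using T_in_char[rule_format, of 1] by (simp add: char_plane_def)
  also have "\<dots> = 0"
    by (simp add: C' C'_expand tangent lip.add_left lip.scaleR_left)
  finally have "II S N ?p T (vector_derivative (S \<circ> \<gamma>) (at t)) = 0"
    using II_eq_minus_lip_frechet_derivative[OF S2 smooth_differentiable[OF N_smooth] tangent reg]
    by (simp add: T C' N')
  moreover have "vector_derivative (S \<circ> \<gamma>) (at t) \<in> span {pd_u S ?p, pd_v S ?p}"
    by (simp add: C' C'_expand span_add span_scale span_base)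
  ultimately show ?thesis
    using L_conjugate_if_II_eq_0[OF reg T_tangent] C_regular t_in by blast
qed

end
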